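(* Let $c>0$ (and $s>0$, $F>1$) be constants. There exists a constant $\alpha_1>0$ depending only on $c$ such that at every time $t$, $$\mathbb E[Z^{t+1}-Z^t\mid x^t,\lambda^t]\ge -\Pr[B\mid x^t,\lambda^t]\cdot\alpha_1(1+\log\lambda^t).$$
   Context: Consider the SA-$(1,\lambda)$-EA on a dynamic monotone function: a function $f:\{0,1\}^n\to\mathbb R$ is monotone if $f(x)>f(y)$ whenever $x\ne y$ and $x_i\ge y_i$ for all $i$; $(f^t)_{t\ge0}$ is a sequence of monotone functions, $f^t$ possibly chosen adversarially depending on $x^t$. The algorithm (with constants $c>0$, $s>0$, $F>1$) maintains $x^t\in\{0,1\}^n$, real $\lambda^t\ge1$; in generation $t$ it creates $\lfloor\lambda^t\rceil$ (nearest integer) offspring, each independently by flipping every bit of $x^t$ independently with probability $c/n$; $x^{t+1}$ is an offspring maximizing $f^t$ (ties uniformly at random); $\lambda^{t+1}=\max\{1,\lambda^t/F\}$ if $f^t(x^{t+1})>f^t(x^t)$, else $\lambda^{t+1}=F^{1/s}\lambda^t$. $Z^t$ is the number of zero-bits of $x^t$. $B$ is the event that some offspring of $x^t$ flips at least one zero-bit of $x^t$. $\log$ is the natural logarithm. *)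

theory Defs
  imports "HOL-Probability.Probability"
begin

text \<open>Search points are bit strings of length n, represented as bool lists
  (True = one-bit, False = zero-bit).\<close>

definition monotone_pb :: "nat \<Rightarrow> (bool list \<Rightarrow> real) \<Rightarrow> bool" where
  "monotone_pb n f \<longleftrightarrow>
     (\<forall>x y. length x = n \<longrightarrow> length y = n \<longrightarrow> x \<noteq> y \<longrightarrow>
            (\<forall>i<n. y ! i \<le> x ! i) \<longrightarrow> f x > f y)"

definition zeros :: "nat \<Rightarrow> bool list \<Rightarrow> nat" where
  "zeros n x = card {i. i < n \<and> \<not> x ! i}"

fun mutate :: "real \<Rightarrow> bool list \<Rightarrow> bool list pmf" where
  "mutate p [] = return_pmf []"
| "mutate p (b # bs) =
     bind_pmf (bernoulli_pmf p) (\<lambda>fl.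
     bind_pmf (mutate p bs) (\<lambda>rest.
     return_pmf ((if fl then \<not> b else b) # rest)))"

fun offspring :: "real \<Rightarrow> nat \<Rightarrow> bool list \<Rightarrow> bool list list pmf" where
  "offspring p 0 x = return_pmf []"
| "offspring p (Suc k) x =
     bind_pmf (mutate p x) (\<lambda>y.
     bind_pmf (offspring p k x) (\<lambda>ys. return_pmf (y # ys)))"

definition best_idx :: "(bool list \<Rightarrow> real) \<Rightarrow> bool list list \<Rightarrow> nat set" where
  "best_idx f ys = {i. i < length ys \<and> (\<forall>j<length ys. f (ys ! j) \<le> f (ys ! i))}"

text \<open>One generation of the SA-(1,lambda)-EA: returns the offspring population
  together with the selected new parent x^{t+1} (ties broken uniformly at random
  among maximizing offspring).  The update of lambda does not influence x^{t+1}.\<close>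
definition generation :: "real \<Rightarrow> nat \<Rightarrow> real \<Rightarrow> (bool list \<Rightarrow> real) \<Rightarrow> bool list
      \<Rightarrow> (bool list list \<times> bool list) pmf" where
  "generation c n lam f x =
     bind_pmf (offspring (c / real n) (nat (round lam)) x) (\<lambda>ys.
     bind_pmf (pmf_of_set (best_idx f ys)) (\<lambda>i. return_pmf (ys, ys ! i)))"

definition event_B :: "nat \<Rightarrow> bool list \<Rightarrow> bool list list \<Rightarrow> bool" where
  "event_B n x ys \<longleftrightarrow> (\<exists>y \<in> set ys. \<exists>i<n. \<not> x ! i \<and> y ! i)"

end

theory Submission
  imports Defs "HOL-Analysis.Harmonic_Numbers"
begin

text \<open>The number of zero-bits can drop at most by the number of zero-bits that the selected
  offspring flips, hence at most by the maximum \<open>M\<close> of these counts over all offspring,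
  whatever the fitness function.  Cutting at a threshold \<open>T \<approx> log\<^sub>2 \<lambda>\<close> gives
  \<open>E[M] \<le> T Pr[M > 0] + \<lambda> E[max 0 (F - T)]\<close>, where \<open>F\<close> is the count of a single offspring,
  and \<open>E[max 0 (F - T)] \<le> E[F 2^F] / 2^(T+1) \<le> p Z e^c / 2^T\<close> by the moment generating
  function of the binomial distribution.  Finally \<open>p Z \<le> (1 + c) (1 - (1 - p)^Z)\<close>, where
  \<open>1 - (1 - p)^Z\<close> is the probability that already the first offspring causes \<open>B\<close>, and \<open>B\<close>
  is the event \<open>M > 0\<close>.\<close>

lemma expectation_bind_pmf_finite:
  fixes h :: "'b \<Rightarrow> real"
  assumes "finite (set_pmf M)" "\<And>x. x \<in> set_pmf M \<Longrightarrow> finite (set_pmf (N x))"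
  shows "measure_pmf.expectation (bind_pmf M N) h =
         measure_pmf.expectation M (\<lambda>x. measure_pmf.expectation (N x) h)"
proof -
  have "measure_pmf.expectation (bind_pmf M N) h =
        (\<Sum>a\<in>set_pmf M. pmf M a *\<^sub>R measure_pmf.expectation (N a) h)"
    using assms by (intro pmf_expectation_bind) auto
  also have "\<dots> = measure_pmf.expectation M (\<lambda>x. measure_pmf.expectation (N x) h)"
    using assms by (subst integral_measure_pmf[of "set_pmf M"]) auto
  finally show ?thesis .
qed

lemma finite_set_pmf_bernoulli: "finite (set_pmf (bernoulli_pmf p))"
  by (rule finite_subset[OF subset_UNIV]) simp

lemma finite_set_pmf_mutate: "finite (set_pmf (mutate p x))"
  by (induction x) (auto intro: finite_set_pmf_bernoulli)

lemma length_mutate: "y \<in> set_pmf (mutate p x) \<Longrightarrow> length y = length x"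
  by (induction x arbitrary: y) auto

lemma finite_set_pmf_offspring: "finite (set_pmf (offspring p k x))"
  by (induction k) (auto intro: finite_set_pmf_mutate)

lemma set_pmf_offspring:
  "ys \<in> set_pmf (offspring p k x) \<Longrightarrow> length ys = k \<and> set ys \<subseteq> set_pmf (mutate p x)"
  by (induction k arbitrary: ys) force+

lemma expectation_mutate_Cons:
  fixes h :: "bool list \<Rightarrow> real"
  assumes "0 \<le> p" "p \<le> 1"
  shows "measure_pmf.expectation (mutate p (b # bs)) h =
         p * measure_pmf.expectation (mutate p bs) (\<lambda>r. h ((\<not> b) # r)) +
         (1 - p) * measure_pmf.expectation (mutate p bs) (\<lambda>r. h (b # r))"
  using assms
  by (simp only: mutate.simps, subst expectation_bind_pmf_finite)
     (auto simp: finite_set_pmf_bernoulli finite_set_pmf_mutate expectation_bind_pmf_finite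
                 mult.commute)

lemma expectation_offspring_sum_list:
  fixes \<phi> :: "bool list \<Rightarrow> real"
  shows "measure_pmf.expectation (offspring p k x) (\<lambda>ys. sum_list (map \<phi> ys)) =
         k * measure_pmf.expectation (mutate p x) \<phi>"
proof (induction k)
  case 0
  then show ?case by simp
next
  case (Suc k)
  have "measure_pmf.expectation (offspring p (Suc k) x) (\<lambda>ys. sum_list (map \<phi> ys)) =
        measure_pmf.expectation (mutate p x)
          (\<lambda>y. measure_pmf.expectation (offspring p k x) (\<lambda>ys. \<phi> y + sum_list (map \<phi> ys)))"
    by (simp only: offspring.simps, subst expectation_bind_pmf_finite)
       (auto simp: finite_set_pmf_mutate finite_set_pmf_offspring expectation_bind_pmf_finite)
  also have "\<dots> = Suc k * measure_pmf.expectation (mutate p x) \<phi>"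
    using Suc by (simp add: integrable_measure_pmf_finite finite_set_pmf_offspring
                            finite_set_pmf_mutate algebra_simps)
  finally show ?case .
qed

lemma expectation_offspring_hd:
  fixes \<phi> :: "bool list \<Rightarrow> real"
  shows "measure_pmf.expectation (offspring p (Suc k) x) (\<lambda>ys. \<phi> (hd ys)) =
         measure_pmf.expectation (mutate p x) \<phi>"
  by (simp only: offspring.simps, subst expectation_bind_pmf_finite)
     (auto simp: finite_set_pmf_mutate finite_set_pmf_offspring expectation_bind_pmf_finite)

fun zero_flips :: "bool list \<Rightarrow> bool list \<Rightarrow> nat" where
  "zero_flips (a # as) (b # bs) = of_bool (\<not> a \<and> b) + zero_flips as bs"
| "zero_flips _ _ = 0"

definition num_zeros :: "bool list \<Rightarrow> nat" where
  "num_zeros x = length (filter Not x)"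

lemma num_zeros_simps [simp]:
  "num_zeros [] = 0" "num_zeros (b # bs) = of_bool (\<not> b) + num_zeros bs"
  by (auto simp: num_zeros_def)

lemma zeros_eq_num_zeros: "length x = n \<Longrightarrow> zeros n x = num_zeros x"
  by (simp add: zeros_def num_zeros_def length_filter_conv_card)

lemma num_zeros_le_length: "num_zeros x \<le> length x"
  by (simp add: num_zeros_def)

lemma num_zeros_le_add_zero_flips:
  "length x = length y \<Longrightarrow> num_zeros x \<le> num_zeros y + zero_flips x y"
  by (induction x y rule: list_induct2) auto

lemma zero_flips_pos_iff:
  "length x = length y \<Longrightarrow> 0 < zero_flips x y \<longleftrightarrow> (\<exists>i<length x. \<not> x ! i \<and> y ! i)"
  by (induction x y rule: list_induct2) (auto simp: less_Suc_eq_0_disj)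

lemma expectation_two_pow_zero_flips:
  assumes "0 \<le> p" "p \<le> 1"
  shows "measure_pmf.expectation (mutate p x) (\<lambda>y. (2::real) ^ zero_flips x y) =
         (1 + p) ^ num_zeros x"
proof (induction x)
  case (Cons b bs)
  then show ?case
    by (subst expectation_mutate_Cons[OF assms]) (cases b, simp_all add: algebra_simps)
qed simp

lemma expectation_zero_flips_pos:
  assumes "0 \<le> p" "p \<le> 1"
  shows "measure_pmf.expectation (mutate p x) (\<lambda>y. of_bool (0 < zero_flips x y)) =
         1 - (1 - p) ^ num_zeros x"
proof (induction x)
  case (Cons b bs)
  then show ?case
    by (subst expectation_mutate_Cons[OF assms]) (cases b; simp add: Cons; simp add: algebra_simps)
qed simp

lemma expectation_zero_flips_mult_two_pow_le:
  assumes "0 \<le> p" "p \<le> 1"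
  shows "measure_pmf.expectation (mutate p x) (\<lambda>y. real (zero_flips x y) * 2 ^ zero_flips x y)
         \<le> 2 * p * num_zeros x * (1 + p) ^ num_zeros x"
proof (induction x)
  case Nil
  then show ?case by simp
next
  case (Cons b bs)
  let ?E = "measure_pmf.expectation (mutate p bs)"
  let ?F = "?E (\<lambda>y. real (zero_flips bs y) * 2 ^ zero_flips bs y)"
  show ?case
  proof (cases b)
    case True
    then show ?thesis
      using Cons by (subst expectation_mutate_Cons[OF assms]) (simp add: algebra_simps)
  next
    case False
    have "?E (\<lambda>y. real (1 + zero_flips bs y) * 2 ^ (1 + zero_flips bs y)) =
          2 * ?E (\<lambda>y. 2 ^ zero_flips bs y) + 2 * ?F"
      by (simp add: algebra_simps integrable_measure_pmf_finite finite_set_pmf_mutate)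
    then have "measure_pmf.expectation (mutate p (b # bs))
                 (\<lambda>y. real (zero_flips (b # bs) y) * 2 ^ zero_flips (b # bs) y) =
               p * (2 * ?E (\<lambda>y. 2 ^ zero_flips bs y) + 2 * ?F) + (1 - p) * ?F"
      using False by (subst expectation_mutate_Cons[OF assms]) (simp only: zero_flips.simps, simp)
    also have "\<dots> = 2 * p * (1 + p) ^ num_zeros bs + (1 + p) * ?F"
      using expectation_two_pow_zero_flips[OF assms, of bs] by (simp add: algebra_simps)
    also have "\<dots> \<le> 2 * p * (1 + p) ^ Suc (num_zeros bs)
                    + (1 + p) * (2 * p * num_zeros bs * (1 + p) ^ num_zeros bs)"
      using assms Cons by (intro add_mono mult_left_mono) auto
    also have "\<dots> = 2 * p * num_zeros (b # bs) * (1 + p) ^ num_zeros (b # bs)"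
      using False by (simp add: algebra_simps)
    finally show ?thesis .
  qed
qed

fun max_zero_flips :: "bool list \<Rightarrow> bool list list \<Rightarrow> nat" where
  "max_zero_flips x [] = 0"
| "max_zero_flips x (y # ys) = max (zero_flips x y) (max_zero_flips x ys)"

lemma zero_flips_le_max_zero_flips: "y \<in> set ys \<Longrightarrow> zero_flips x y \<le> max_zero_flips x ys"
  by (induction ys) auto

lemma max_zero_flips_pos_iff: "0 < max_zero_flips x ys \<longleftrightarrow> (\<exists>y\<in>set ys. 0 < zero_flips x y)"
  by (induction ys) auto

lemma max_zero_flips_le_threshold_plus_excess:
  "real (max_zero_flips x ys) \<le>
     real T * of_bool (0 < max_zero_flips x ys) + (\<Sum>y\<leftarrow>ys. max 0 (real (zero_flips x y) - T))"
proof (induction ys)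
  case (Cons y ys)
  have "0 \<le> (\<Sum>y\<leftarrow>ys. max 0 (real (zero_flips x y) - T))"
    by (induction ys) auto
  with Cons show ?case
    by (cases "zero_flips x y \<le> max_zero_flips x ys") (auto simp: max_def split: if_splits)
qed simp

lemma excess_le_mult_two_pow_div:
  fixes g T :: nat
  shows "max 0 (real g - real T) \<le> real g * 2 ^ g / 2 ^ (T + 1)"
proof (cases "g \<le> T")
  case False
  then have "(2::real) ^ (T + 1) \<le> 2 ^ g"
    by (intro power_increasing) auto
  then have "real g * 1 \<le> real g * (2 ^ g / 2 ^ (T + 1))"
    by (intro mult_left_mono) auto
  then show ?thesis
    by auto
qed simp

lemma mult_le_one_plus_mult_one_minus_power:
  fixes p c :: real and z :: nat
  assumes "0 \<le> p" "p \<le> 1" "p * z \<le> c"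
  shows "p * z \<le> (1 + c) * (1 - (1 - p) ^ z)"
proof -
  let ?u = "p * z"
  have u: "0 \<le> ?u" "exp (- ?u) \<le> 1"
    using assms by simp_all
  have "(1 - p) ^ z \<le> exp (- p) ^ z"
    using assms exp_ge_add_one_self[of "- p"] by (intro power_mono) auto
  also have "\<dots> = exp (- ?u)"
    by (simp add: exp_of_nat_mult[symmetric] mult.commute)
  finally have power_le: "(1 - p) ^ z \<le> exp (- ?u)" .
  have "exp (- ?u) * (1 + ?u) \<le> exp (- ?u) * exp ?u"
    using exp_ge_add_one_self[of ?u] by (intro mult_left_mono) auto
  then have "?u \<le> (1 + ?u) * (1 - exp (- ?u))"
    by (simp add: algebra_simps exp_minus_inverse)
  also have "\<dots> \<le> (1 + c) * (1 - (1 - p) ^ z)"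
    using assms power_le u by (intro mult_mono) linarith+
  finally show ?thesis .
qed

lemma one_minus_power_le_prob_max_zero_flips_pos:
  assumes "0 \<le> p" "p \<le> 1" "1 \<le> k"
  shows "1 - (1 - p) ^ num_zeros x \<le>
         measure_pmf.expectation (offspring p k x) (\<lambda>ys. of_bool (0 < max_zero_flips x ys))"
proof -
  obtain k' where k: "k = Suc k'"
    using assms(3) by (cases k) auto
  have "1 - (1 - p) ^ num_zeros x =
        measure_pmf.expectation (offspring p k x) (\<lambda>ys. of_bool (0 < zero_flips x (hd ys)))"
    using expectation_offspring_hd[where \<phi> = "\<lambda>y. of_bool (0 < zero_flips x y)" and k = k']
          expectation_zero_flips_pos[OF assms(1,2), of x]
    by (simp only: k)
  also have "\<dots> \<le> measure_pmf.expectation (offspring p k x) (\<lambda>ys. of_bool (0 < max_zero_flips x ys))"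
  proof (intro integral_mono_AE AE_pmfI integrable_measure_pmf_finite finite_set_pmf_offspring)
    fix ys
    assume "ys \<in> set_pmf (offspring p k x)"
    then have "hd ys \<in> set ys"
      using set_pmf_offspring k by (cases ys) auto
    then show "of_bool (0 < zero_flips x (hd ys)) \<le> (of_bool (0 < max_zero_flips x ys) :: real)"
      using zero_flips_le_max_zero_flips[of "hd ys" ys x] by auto
  qed
  finally show ?thesis .
qed

lemma expectation_max_zero_flips_le_threshold_plus_excess:
  "measure_pmf.expectation (offspring p k x) (\<lambda>ys. real (max_zero_flips x ys)) \<le>
     real T * measure_pmf.expectation (offspring p k x) (\<lambda>ys. of_bool (0 < max_zero_flips x ys))
     + k * measure_pmf.expectation (mutate p x) (\<lambda>y. max 0 (real (zero_flips x y) - T))"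
proof -
  have "measure_pmf.expectation (offspring p k x) (\<lambda>ys. real (max_zero_flips x ys)) \<le>
        measure_pmf.expectation (offspring p k x)
          (\<lambda>ys. real T * of_bool (0 < max_zero_flips x ys)
                + (\<Sum>y\<leftarrow>ys. max 0 (real (zero_flips x y) - T)))"
    by (intro integral_mono integrable_measure_pmf_finite finite_set_pmf_offspring
              max_zero_flips_le_threshold_plus_excess)
  then show ?thesis
    by (simp add: integrable_measure_pmf_finite finite_set_pmf_offspring
                  expectation_offspring_sum_list)
qed

lemma expected_excess_le:
  fixes p c :: real
  assumes "0 \<le> p" "p \<le> 1" "p * num_zeros x \<le> c" "1 \<le> k" "real k \<le> 2 ^ T"
  shows "k * measure_pmf.expectation (mutate p x) (\<lambda>y. max 0 (real (zero_flips x y) - T)) \<le>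
         (1 + c) * exp c *
           measure_pmf.expectation (offspring p k x) (\<lambda>ys. of_bool (0 < max_zero_flips x ys))"
proof -
  let ?z = "num_zeros x"
  have c_nonneg: "0 \<le> c"
    using assms(1,3) by (meson mult_nonneg_nonneg of_nat_0_le_iff order_trans)
  have "(1 + p) ^ ?z \<le> exp p ^ ?z"
    using assms by (intro power_mono) (auto simp: exp_ge_add_one_self add.commute)
  also have "\<dots> \<le> exp c"
    using assms by (simp add: exp_of_nat_mult[symmetric] mult.commute)
  finally have growth: "(1 + p) ^ ?z \<le> exp c" .
  have "measure_pmf.expectation (mutate p x) (\<lambda>y. max 0 (real (zero_flips x y) - T)) \<le>
        measure_pmf.expectation (mutate p x) (\<lambda>y. real (zero_flips x y) * 2 ^ zero_flips x y) / 2 ^ (T + 1)"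
  proof -
    have "measure_pmf.expectation (mutate p x) (\<lambda>y. max 0 (real (zero_flips x y) - T)) \<le>
          measure_pmf.expectation (mutate p x)
            (\<lambda>y. real (zero_flips x y) * 2 ^ zero_flips x y / 2 ^ (T + 1))"
      by (intro integral_mono integrable_measure_pmf_finite finite_set_pmf_mutate
                excess_le_mult_two_pow_div)
    then show ?thesis
      by simp
  qed
  also have "\<dots> \<le> 2 * p * ?z * exp c / 2 ^ (T + 1)"
    using expectation_zero_flips_mult_two_pow_le[OF assms(1,2), of x] growth assms(1)
    by (intro divide_right_mono order_trans[OF _ mult_left_mono[OF growth]]) auto
  finally have "k * measure_pmf.expectation (mutate p x) (\<lambda>y. max 0 (real (zero_flips x y) - T)) \<le>
                k * (2 * p * ?z * exp c / 2 ^ (T + 1))"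
    by (rule mult_left_mono) simp
  also have "\<dots> = (real k / 2 ^ T) * (p * ?z * exp c)"
    by (simp add: field_simps)
  also have "\<dots> \<le> p * ?z * exp c"
    using assms by (intro mult_left_le_one_le) auto
  also have "\<dots> \<le> (1 + c) * exp c * (1 - (1 - p) ^ ?z)"
    using mult_le_one_plus_mult_one_minus_power[OF assms(1-3)]
    by (simp add: mult.commute mult.left_commute)
  also have "\<dots> \<le> (1 + c) * exp c *
           measure_pmf.expectation (offspring p k x) (\<lambda>ys. of_bool (0 < max_zero_flips x ys))"
    using one_minus_power_le_prob_max_zero_flips_pos[OF assms(1,2,4), of x] c_nonneg
    by (intro mult_left_mono) auto
  finally show ?thesis .
qed

lemma expectation_max_zero_flips_le:
  fixes p c :: real
  assumes "0 \<le> p" "p \<le> 1" "p * num_zeros x \<le> c" "1 \<le> k" "real k \<le> 2 ^ T"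
  shows "measure_pmf.expectation (offspring p k x) (\<lambda>ys. real (max_zero_flips x ys)) \<le>
         (T + (1 + c) * exp c) *
           measure_pmf.expectation (offspring p k x) (\<lambda>ys. of_bool (0 < max_zero_flips x ys))"
  using expectation_max_zero_flips_le_threshold_plus_excess[of p k x T] expected_excess_le[OF assms]
  by (simp add: algebra_simps)

lemma finite_best_idx: "finite (best_idx f ys)"
  by (simp add: best_idx_def)

lemma best_idx_nonempty:
  assumes "ys \<noteq> []"
  shows "best_idx f ys \<noteq> {}"
proof -
  obtain i where "is_arg_min (\<lambda>i. - f (ys ! i)) (\<lambda>i. i \<in> {..<length ys}) i"
    using ex_is_arg_min_if_finite[of "{..<length ys}" "\<lambda>i. - f (ys ! i)"] assms by auto
  then have "i \<in> best_idx f ys"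
    unfolding best_idx_def is_arg_min_def by (auto simp: not_less, metis not_le)
  then show ?thesis
    by blast
qed

lemma offspring_nonempty: "1 \<le> k \<Longrightarrow> ys \<in> set_pmf (offspring p k x) \<Longrightarrow> ys \<noteq> []"
  using set_pmf_offspring by fastforce

lemma map_fst_generation:
  assumes "1 \<le> nat (round lam)"
  shows "map_pmf fst (generation c n lam f x) = offspring (c / real n) (nat (round lam)) x"
  unfolding generation_def
  using offspring_nonempty[OF assms] best_idx_nonempty finite_best_idx
  by (simp add: map_bind_pmf bind_pmf_const bind_return_pmf' cong: bind_pmf_cong)

lemma set_pmf_generation:
  assumes "1 \<le> nat (round lam)" "z \<in> set_pmf (generation c n lam f x)"
  shows "fst z \<in> set_pmf (offspring (c / real n) (nat (round lam)) x) \<and> snd z \<in> set (fst z)"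
  using assms offspring_nonempty[OF assms(1)] best_idx_nonempty finite_best_idx
  by (auto simp: generation_def best_idx_def)

lemma finite_set_pmf_generation:
  assumes "1 \<le> nat (round lam)"
  shows "finite (set_pmf (generation c n lam f x))"
  using offspring_nonempty[OF assms] best_idx_nonempty finite_best_idx finite_set_pmf_offspring
  by (auto simp: generation_def)

lemma expectation_zeros_change_generation_ge:
  assumes "length x = n" "1 \<le> nat (round lam)"
  shows "- measure_pmf.expectation (offspring (c / real n) (nat (round lam)) x)
             (\<lambda>ys. real (max_zero_flips x ys))
         \<le> measure_pmf.expectation (generation c n lam f x)
             (\<lambda>(ys, x'). real (zeros n x') - real (zeros n x))"
proof -
  let ?G = "generation c n lam f x"
  have "- measure_pmf.expectation (offspring (c / real n) (nat (round lam)) x)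
            (\<lambda>ys. real (max_zero_flips x ys)) =
        measure_pmf.expectation ?G (\<lambda>z. - real (max_zero_flips x (fst z)))"
    using integral_map_pmf[where f = "\<lambda>ys. real (max_zero_flips x ys)" and g = fst and p = ?G]
    by (simp add: map_fst_generation[OF assms(2)])
  also have "\<dots> \<le> measure_pmf.expectation ?G (\<lambda>(ys, x'). real (zeros n x') - real (zeros n x))"
  proof (intro integral_mono_AE AE_pmfI integrable_measure_pmf_finite
               finite_set_pmf_generation[OF assms(2)])
    fix z
    assume "z \<in> set_pmf ?G"
    moreover obtain ys x' where z: "z = (ys, x')"
      by fastforce
    ultimately have "ys \<in> set_pmf (offspring (c / real n) (nat (round lam)) x)" "x' \<in> set ys"
      using set_pmf_generation[OF assms(2)] by fastforce+
    then have "length x' = n" "zero_flips x x' \<le> max_zero_flips x ys"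
      using set_pmf_offspring length_mutate assms(1) zero_flips_le_max_zero_flips by blast+
    then show "- real (max_zero_flips x (fst z)) \<le>
               (case z of (ys, x') \<Rightarrow> real (zeros n x') - real (zeros n x))"
      using num_zeros_le_add_zero_flips[of x x'] assms(1) z by (simp add: zeros_eq_num_zeros)
  qed
  finally show ?thesis .
qed

lemma prob_event_B_generation:
  assumes "length x = n" "1 \<le> nat (round lam)"
  shows "measure_pmf.prob (generation c n lam f x) {(ys, x'). event_B n x ys} =
         measure_pmf.expectation (offspring (c / real n) (nat (round lam)) x)
           (\<lambda>ys. of_bool (0 < max_zero_flips x ys))"
proof -
  let ?Off = "offspring (c / real n) (nat (round lam)) x"
  have "measure_pmf.prob (generation c n lam f x) {(ys, x'). event_B n x ys} =
        measure_pmf.prob (map_pmf fst (generation c n lam f x)) {ys. event_B n x ys}"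
    unfolding measure_map_pmf by (rule arg_cong[where f = "measure_pmf.prob _"]) auto
  also have "\<dots> = measure_pmf.expectation ?Off (indicator {ys. event_B n x ys})"
    by (simp add: map_fst_generation[OF assms(2)])
  also have "\<dots> = measure_pmf.expectation ?Off (\<lambda>ys. of_bool (0 < max_zero_flips x ys))"
  proof (intro integral_cong_AE AE_pmfI)
    fix ys
    assume "ys \<in> set_pmf ?Off"
    then have "\<forall>y\<in>set ys. length y = length x"
      using set_pmf_offspring length_mutate by blast
    then have "event_B n x ys \<longleftrightarrow> 0 < max_zero_flips x ys"
      using assms(1) by (auto simp: event_B_def max_zero_flips_pos_iff zero_flips_pos_iff)
    then show "indicator {ys. event_B n x ys} ys = (of_bool (0 < max_zero_flips x ys) :: real)"
      by simp
  qed simp_all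
  finally show ?thesis .
qed

lemma two_pow_cover_with_log_bound:
  fixes lam :: real
  assumes "1 \<le> lam" "1 \<le> k" "real k \<le> 2 * lam"
  obtains T :: nat where "real k \<le> 2 ^ T" "real T \<le> 2 * (1 + ln lam)"
proof -
  obtain m where m: "2 ^ m \<le> k" "k < 2 ^ (m + 1)"
    using ex_power_ivl1[of 2 k] assms(2) by auto
  have "real k \<le> 2 ^ (m + 1)"
    using m(2) by (metis less_imp_le of_nat_le_iff of_nat_numeral of_nat_power)
  have "real m * ln 2 = ln (2 ^ m)"
    by (simp add: ln_realpow)
  also have "\<dots> \<le> ln (2 * lam)"
  proof (rule ln_mono)
    show "(2::real) ^ m \<le> 2 * lam"
      using m(1) assms(3) by (metis of_nat_le_iff of_nat_numeral of_nat_power order_trans)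
  qed simp_all
  also have "\<dots> = ln 2 + ln lam"
    using assms(1) by (simp add: ln_mult)
  finally have "real m * ln 2 \<le> ln 2 + ln lam" .
  moreover have "ln lam \<le> 3 / 2 * ln 2 * ln lam"
    using mult_right_mono[of 1 "3 / 2 * ln 2" "ln lam"] ln2_ge_two_thirds assms(1) by simp
  ultimately have "real m * ln 2 \<le> (1 + 3 / 2 * ln lam) * ln 2"
    by (simp add: algebra_simps)
  then have "real m \<le> 1 + 3 / 2 * ln lam"
    using ln2_ge_two_thirds by simp
  then have "real (m + 1) \<le> 2 * (1 + ln lam)"
    using ln_ge_zero[OF assms(1)] by simp
  with \<open>real k \<le> 2 ^ (m + 1)\<close> show ?thesis
    by (rule that)
qed

lemma nat_round_bounds:
  fixes lam :: real
  assumes "1 \<le> lam"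
  shows "1 \<le> nat (round lam)" "real (nat (round lam)) \<le> 2 * lam"
proof -
  have "1 \<le> round lam"
    using round_mono[OF assms] by simp
  then show "1 \<le> nat (round lam)"
    by simp
  show "real (nat (round lam)) \<le> 2 * lam"
    using of_int_round_le[of lam] assms \<open>1 \<le> round lam\<close> by simp
qed

lemma expectation_zeros_change_ge:
  assumes c: "0 < c" and n: "1 \<le> n" "c \<le> real n" and x: "length x = n" and lam: "1 \<le> lam"
  shows "- measure_pmf.prob (generation c n lam f x) {(ys, x'). event_B n x ys}
           * (2 + (1 + c) * exp c) * (1 + ln lam)
         \<le> measure_pmf.expectation (generation c n lam f x)
             (\<lambda>(ys, x'). real (zeros n x') - real (zeros n x))"
proof -
  define p where "p = c / real n"
  define k where "k = nat (round lam)"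
  let ?Q = "measure_pmf.expectation (offspring p k x) (\<lambda>ys. of_bool (0 < max_zero_flips x ys))"
  have k: "1 \<le> k" "real k \<le> 2 * lam"
    unfolding k_def using nat_round_bounds[OF lam] .
  then obtain T where T: "real k \<le> 2 ^ T" "real T \<le> 2 * (1 + ln lam)"
    using two_pow_cover_with_log_bound[OF lam] by blast
  have "p * num_zeros x \<le> p * n"
    using num_zeros_le_length[of x] x c n by (intro mult_left_mono) (auto simp: p_def)
  then have p: "0 \<le> p" "p \<le> 1" "p * num_zeros x \<le> c"
    using c n by (auto simp: p_def)
  have "0 \<le> (1 + c) * exp c * ln lam"
    using ln_ge_zero[OF lam] c by simp
  then have "T + (1 + c) * exp c \<le> (2 + (1 + c) * exp c) * (1 + ln lam)"
    using T(2) by (simp add: algebra_simps)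
  then have "measure_pmf.expectation (offspring p k x) (\<lambda>ys. real (max_zero_flips x ys))
             \<le> (2 + (1 + c) * exp c) * (1 + ln lam) * ?Q"
    using expectation_max_zero_flips_le[OF p k(1) T(1)]
    by (elim order_trans mult_right_mono) (simp add: integral_nonneg_AE)
  then show ?thesis
    using expectation_zeros_change_generation_ge[OF x, of lam c f]
          prob_event_B_generation[OF x, of lam c f] k(1)
    by (simp add: p_def k_def mult_ac)
qed

theorem mainTheorem17:
  fixes c :: real
  assumes "c > 0"
  shows "\<exists>\<alpha>1 > 0. \<forall>(n::nat) (x::bool list) (lam::real) (f::bool list \<Rightarrow> real).
           n \<ge> 1 \<longrightarrow> c \<le> real n \<longrightarrow> length x = n \<longrightarrow> lam \<ge> 1 \<longrightarrow> monotone_pb n f \<longrightarrow>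
           measure_pmf.expectation (generation c n lam f x)
               (\<lambda>(ys, x'). real (zeros n x') - real (zeros n x))
           \<ge> - measure_pmf.prob (generation c n lam f x) {(ys, x'). event_B n x ys}
               * \<alpha>1 * (1 + ln lam)"
proof (intro exI[of _ "2 + (1 + c) * exp c"] conjI allI impI)
  show "0 < 2 + (1 + c) * exp c"
    using assms by (simp add: add_pos_nonneg)
qed (use expectation_zeros_change_ge[OF assms] in simp_all)

end
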